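(* Let $(E,\pi,M)$ be a bundle with connection $\Delta^h$, let $\{u^I\}$ be bundle coordinates on an open set $W\subseteq E$, let $\{X_I\}$ be the frame adapted to $\{\partial/\partial u^I\}$ and $\Gamma_\mu^a$ the coefficients of $\Delta^h$ in it. Let $V\subseteq W$ be open and $U\subseteq V$, and suppose the normal coordinates equation $$\Big(\frac{\partial\tilde u^a}{\partial u^b}\Gamma_\mu^b+\frac{\partial\tilde u^a}{\partial u^\mu}\Big)\Big|_U=0$$ has solutions. Then all frames $\{\tilde X_I\}$ normal on $U$ and adapted to (the coordinate frames of) local bundle coordinates defined on $V$ are described by $$\tilde X_\mu|_U=(A_\mu^\nu X_\nu)|_U=\frac{\partial}{\partial\tilde u^\mu}\Big|_U,\qquad \tilde X_a|_U=(A_a^bX_b)|_U=\frac{\partial}{\partial\tilde u^a}\Big|_U,$$ where $\{\tilde u^I\}$ are bundle coordinates with domain $V$ whose fibre components $\tilde u^a$ are solutions of the normal coordinates equation above, $\{\tilde X_I\}$ is the frame adapted to $\{\partial/\partial\tilde u^I\}$, and $A_I^J=\partial u^J/\partial\tilde u^I$.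
   Context: $\dim M=n$, fibre dimension $r$; indices $\mu,\nu$ over $1,\dots,n$, $a,b$ over $n+1,\dots,n+r$, $I,J$ over $1,\dots,n+r$; summation convention. Bundle coordinates on open $U\subseteq E$: coordinates $\{u^I\}$ with $u^\mu=x^\mu\circ\pi$ for coordinates $\{x^\mu\}$ on $\pi(U)$; admissible changes have $\tilde u^\mu$ depending only on $u^1,\dots,u^n$. Vertical distribution $\Delta^v_p=T_p(\pi^{-1}(\pi(p)))$; a connection is an $n$-dimensional distribution $\Delta^h$ with $\Delta^v_p\oplus\Delta^h_p=T_p(E)$. The frame adapted to $\{e_I\}$ (with $\{e_a\}$ a basis of $\Delta^v$) is $X_\mu=(\pi_*|_{\Delta^h})^{-1}\pi_*(e_\mu)$, $X_a=e_a$; then $X_\mu=e_\mu+\Gamma_\mu^be_b$ defines the coefficients $\Gamma_\mu^a$. An adapted frame is normal on $U$ if its coefficients vanish on $U$. *)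

theory Defs
  imports "HOL-Analysis.Analysis"
begin

text \<open>The open set W of the bundle E carrying the bundle coordinates
  u = (u^mu, u^a) is identified, via u, with an open subset of
  real^'n \<times> real^'r (first component: base coordinates x^mu = u^mu, second
  component: fibre coordinates u^a). Tangent vectors at points of W are identified,
  via du, with their u-components in real^'n \<times> real^'r. The projection pi is
  fst, hence pi_* of a tangent vector is (in the base coordinates) its fst, and the
  vertical space is the set of vectors with fst = 0. Indices I range over
  'n + 'r: Inl mu is a base index, Inr a a fibre index.\<close>

type_synonym ('n, 'r) pt = "(real^'n) \<times> (real^'r)"

definition bvec :: "'n + 'r \<Rightarrow> ('n::finite, 'r::finite) pt" where
  "bvec I = (case I of Inl mu \<Rightarrow> (axis mu 1, 0) | Inr a \<Rightarrow> (0, axis a 1))"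

definition comp :: "('n::finite, 'r::finite) pt \<Rightarrow> 'n + 'r \<Rightarrow> real" where
  "comp v I = (case I of Inl mu \<Rightarrow> fst v $ mu | Inr a \<Rightarrow> snd v $ a)"

fun Ck_on :: "nat \<Rightarrow> ('a::real_normed_vector \<Rightarrow> 'b::real_normed_vector) \<Rightarrow> 'a set \<Rightarrow> bool" where
  "Ck_on 0 f S = continuous_on S f"
| "Ck_on (Suc k) f S =
     (f differentiable_on S \<and> (\<forall>v. Ck_on k (\<lambda>x. frechet_derivative f (at x) v) S))"

definition smooth_on :: "'a::real_normed_vector set \<Rightarrow> ('a \<Rightarrow> 'b::real_normed_vector) \<Rightarrow> bool" where
  "smooth_on S f \<longleftrightarrow> (\<forall>k. Ck_on k f S)"

text \<open>Vertical space (the same at every point in the u-model).\<close>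
definition vert :: "('n::finite, 'r::finite) pt set" where
  "vert = {v. fst v = 0}"

definition connection ::
  "('n::finite, 'r::finite) pt set \<Rightarrow> (('n, 'r) pt \<Rightarrow> ('n, 'r) pt set) \<Rightarrow> bool" where
  "connection W D \<longleftrightarrow>
     (\<forall>p\<in>W. subspace (D p) \<and> dim (D p) = CARD('n) \<and>
        D p \<inter> vert = {0} \<and> {h + w | h w. h \<in> D p \<and> w \<in> vert} = UNIV)"

text \<open>The frame adapted to a frame e (e I p is the I-th vector at p; e (Inr a) are
  vertical): X_mu = (pi_* restricted to D)^{-1} pi_*(e_mu), X_a = e_a.\<close>
definition adapted_frame ::
  "(('n::finite, 'r::finite) pt \<Rightarrow> ('n, 'r) pt set) \<Rightarrow> ('n + 'r \<Rightarrow> ('n, 'r) pt \<Rightarrow> ('n, 'r) pt)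
    \<Rightarrow> 'n + 'r \<Rightarrow> ('n, 'r) pt \<Rightarrow> ('n, 'r) pt" where
  "adapted_frame D e I p = (case I of
      Inl mu \<Rightarrow> (THE X. X \<in> D p \<and> fst X = fst (e (Inl mu) p))
    | Inr a \<Rightarrow> e (Inr a) p)"

definition frame_coeffs ::
  "(('n::finite, 'r::finite) pt \<Rightarrow> ('n, 'r) pt set) \<Rightarrow> ('n + 'r \<Rightarrow> ('n, 'r) pt \<Rightarrow> ('n, 'r) pt)
    \<Rightarrow> ('n, 'r) pt \<Rightarrow> 'n \<Rightarrow> 'r \<Rightarrow> real" where
  "frame_coeffs D e p mu a =
     (THE c. adapted_frame D e (Inl mu) p = e (Inl mu) p + (\<Sum>b\<in>UNIV. c b *\<^sub>R e (Inr b) p)) a"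

definition normal_on ::
  "(('n::finite, 'r::finite) pt \<Rightarrow> ('n, 'r) pt set) \<Rightarrow> ('n + 'r \<Rightarrow> ('n, 'r) pt \<Rightarrow> ('n, 'r) pt)
    \<Rightarrow> ('n, 'r) pt set \<Rightarrow> bool" where
  "normal_on D e U \<longleftrightarrow> (\<forall>p\<in>U. \<forall>mu a. frame_coeffs D e p mu a = 0)"

definition ucoord_frame :: "'n + 'r \<Rightarrow> ('n::finite, 'r::finite) pt \<Rightarrow> ('n, 'r) pt" where
  "ucoord_frame I p = bvec I"

text \<open>Bundle coordinates \<tilde>u = phi (expressed in terms of u) with domain V, and
  psi the inverse map (u in terms of \<tilde>u): a diffeomorphism of V onto an open set,
  with the base components \<tilde>u^mu depending only on u^1..u^n.\<close>
definition bundle_coords ::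
  "('n::finite, 'r::finite) pt set \<Rightarrow> (('n, 'r) pt \<Rightarrow> ('n, 'r) pt) \<Rightarrow> (('n, 'r) pt \<Rightarrow> ('n, 'r) pt) \<Rightarrow> bool" where
  "bundle_coords V phi psi \<longleftrightarrow>
     open (phi ` V) \<and> smooth_on V phi \<and> smooth_on (phi ` V) psi \<and>
     (\<forall>p\<in>V. psi (phi p) = p) \<and> (\<forall>q\<in>phi ` V. phi (psi q) = q) \<and>
     (\<forall>p\<in>V. \<forall>q\<in>V. fst p = fst q \<longrightarrow> fst (phi p) = fst (phi q))"

text \<open>Partial derivative d\<tilde>u^J / du^I at p.\<close>
definition pd :: "(('n::finite, 'r::finite) pt \<Rightarrow> ('n, 'r) pt) \<Rightarrow> ('n, 'r) pt \<Rightarrow> 'n + 'r \<Rightarrow> 'n + 'r \<Rightarrow> real" where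
  "pd phi p I J = comp (frechet_derivative phi (at p) (bvec I)) J"

text \<open>The coordinate frame d/d\<tilde>u^I (u-components): d/d\<tilde>u^I = A_I^J d/du^J with
  A_I^J = du^J/d\<tilde>u^I evaluated at \<tilde>u(p).\<close>
definition Amat :: "(('n::finite, 'r::finite) pt \<Rightarrow> ('n, 'r) pt) \<Rightarrow> (('n, 'r) pt \<Rightarrow> ('n, 'r) pt)
    \<Rightarrow> ('n, 'r) pt \<Rightarrow> 'n + 'r \<Rightarrow> 'n + 'r \<Rightarrow> real" where
  "Amat phi psi p I J = pd psi (phi p) I J"

definition coord_frame :: "(('n::finite, 'r::finite) pt \<Rightarrow> ('n, 'r) pt) \<Rightarrow> (('n, 'r) pt \<Rightarrow> ('n, 'r) pt)
    \<Rightarrow> 'n + 'r \<Rightarrow> ('n, 'r) pt \<Rightarrow> ('n, 'r) pt" where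
  "coord_frame phi psi I p = frechet_derivative psi (at (phi p)) (bvec I)"

definition normal_coords_eq ::
  "(('n::finite, 'r::finite) pt \<Rightarrow> ('n, 'r) pt set) \<Rightarrow> (('n, 'r) pt \<Rightarrow> ('n, 'r) pt) \<Rightarrow> ('n, 'r) pt set \<Rightarrow> bool" where
  "normal_coords_eq D phi U \<longleftrightarrow>
     (\<forall>p\<in>U. \<forall>mu a.
        (\<Sum>b\<in>UNIV. pd phi p (Inr b) (Inr a) * frame_coeffs D ucoord_frame p mu b)
        + pd phi p (Inl mu) (Inr a) = 0)"

end

theory Submission
  imports Defs
begin

(* For the coordinate frame of u~ = phi u we
   have e_I = dpsi (d/du^I); as dphi preserves the vertical space, this frame is normal at p
   iff every d/du~^mu lies in D p. Since D p meets the vertical space only in 0, that happens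
   iff dphi maps D p to vectors without fibre component. Evaluated on the lifts X_mu of d/du^mu,
   whose u-components are (d/du^mu, Gamma_mu), this is the normal coordinates equation
   du~^a (X_mu) = 0. The transformation formulas are linearity of the horizontal lift. *)

lemma linear_cart_expansion:
  fixes f :: "real^'n::finite \<Rightarrow> 'b::real_vector"
  assumes "linear f"
  shows "f x = (\<Sum>i\<in>UNIV. x $ i *\<^sub>R f (axis i 1))"
proof -
  have "f x = f (\<Sum>i\<in>UNIV. x $ i *\<^sub>R axis i 1)"
    using basis_expansion[of x] by (simp add: scalar_mult_eq_scaleR)
  also have "\<dots> = (\<Sum>i\<in>UNIV. x $ i *\<^sub>R f (axis i 1))"
    by (simp add: linear_sum[OF assms] linear_scale[OF assms])
  finally show ?thesis .
qed

lemma has_derivative_left_inverse: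
  assumes f: "(f has_derivative f') (at x)" and g: "(g has_derivative g') (at (f x))"
    and "open S" "x \<in> S" and inv: "\<And>y. y \<in> S \<Longrightarrow> g (f y) = y"
  shows "g' (f' v) = v"
proof -
  have "((g \<circ> f) has_derivative (g' \<circ> f')) (at x)"
    by (rule diff_chain_at[OF f g])
  moreover have "((g \<circ> f) has_derivative id) (at x)"
    by (rule has_derivative_transform_within_open[OF has_derivative_id \<open>open S\<close> \<open>x \<in> S\<close>])
      (simp add: inv)
  ultimately have "g' \<circ> f' = id"
    by (rule has_derivative_unique)
  then show ?thesis
    by (metis comp_apply id_apply)
qed

lemma has_derivative_fibre_preserving:
  fixes f :: "'a::real_normed_vector \<times> 'b::real_normed_vector
    \<Rightarrow> 'c::real_normed_vector \<times> 'd::real_normed_vector"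
  assumes f: "(f has_derivative f') (at x)" and "open S" "x \<in> S"
    and fibre: "\<And>y. y \<in> S \<Longrightarrow> fst y = fst x \<Longrightarrow> fst (f y) = fst (f x)"
  shows "fst (f' (0, w)) = 0"
proof -
  define \<gamma> where "\<gamma> t = x + t *\<^sub>R (0, w)" for t :: real
  have \<gamma>0: "\<gamma> 0 = x"
    unfolding \<gamma>_def by (simp only: scaleR_zero_left add_0_right)
  have "(\<gamma> has_derivative (\<lambda>t. t *\<^sub>R (0, w))) (at 0)"
    unfolding \<gamma>_def by (auto intro!: derivative_eq_intros)
  moreover have "(f has_derivative f') (at (\<gamma> 0))"
    using f by (simp only: \<gamma>0)
  ultimately have "((f \<circ> \<gamma>) has_derivative (f' \<circ> (\<lambda>t. t *\<^sub>R (0, w)))) (at 0)"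
    by (rule diff_chain_at)
  then have "((\<lambda>t. fst ((f \<circ> \<gamma>) t)) has_derivative (\<lambda>t. fst (f' (t *\<^sub>R (0, w))))) (at 0)"
    by (auto dest: has_derivative_fst)
  moreover have "((\<lambda>t. fst ((f \<circ> \<gamma>) t)) has_derivative (\<lambda>t. 0)) (at 0)"
  proof (rule has_derivative_transform_within_open[OF has_derivative_const])
    show "open (\<gamma> -` S)"
      unfolding \<gamma>_def by (intro continuous_open_vimage \<open>open S\<close> continuous_intros)
    show "0 \<in> \<gamma> -` S"
      using \<open>x \<in> S\<close> by (simp add: \<gamma>0)
    show "fst (f x) = fst ((f \<circ> \<gamma>) t)" if "t \<in> \<gamma> -` S" for t
      using that fibre[of "\<gamma> t"] by (simp add: \<gamma>_def)
  qed
  ultimately have "(\<lambda>t. fst (f' (t *\<^sub>R (0, w)))) = (\<lambda>t. 0)"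
    by (rule has_derivative_unique)
  then show ?thesis
    by (metis scaleR_one)
qed

lemma smooth_on_has_derivative:
  assumes "smooth_on S f" and "open S" and "x \<in> S"
  shows "(f has_derivative frechet_derivative f (at x)) (at x)"
proof -
  have "Ck_on (Suc 0) f S"
    using assms(1) unfolding smooth_on_def by blast
  then have "f differentiable at x"
    using assms(2,3) differentiable_on_eq_differentiable_at by auto
  then show ?thesis
    by (rule iffD1[OF frechet_derivative_works])
qed

lemma mem_vert_iff: "v \<in> vert \<longleftrightarrow> fst v = 0"
  by (simp add: vert_def)

lemma subspace_vert: "subspace vert"
  by (auto simp: subspace_def vert_def)

lemma sum_bvec_Inr:
  "(\<Sum>b\<in>UNIV. c b *\<^sub>R bvec (Inr b)) = ((0::real^'n::finite), \<chi> b. c b :: real^'r::finite)"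
  by (simp add: bvec_def prod_eq_iff fst_sum snd_sum vec_eq_iff axis_def if_distrib sum.delta
      cong: if_cong)

lemma vert_expansion:
  fixes v :: "('n::finite, 'r::finite) pt"
  assumes "v \<in> vert"
  shows "(\<Sum>b\<in>UNIV. comp v (Inr b) *\<^sub>R bvec (Inr b)) = v"
  using assms by (simp add: sum_bvec_Inr comp_def mem_vert_iff prod_eq_iff)

definition vert_complement :: "('n::finite, 'r::finite) pt set \<Rightarrow> bool" where
  "vert_complement P \<longleftrightarrow>
     subspace P \<and> P \<inter> vert = {0} \<and> {h + w | h w. h \<in> P \<and> w \<in> vert} = UNIV"

definition hlift :: "('n::finite, 'r::finite) pt set \<Rightarrow> real^'n \<Rightarrow> ('n, 'r) pt" where
  "hlift P x = (THE X. X \<in> P \<and> fst X = x)"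

lemma connection_vert_complement:
  assumes "connection W D" and "p \<in> W"
  shows "vert_complement (D p)"
  using assms unfolding connection_def vert_complement_def by blast

lemma vert_complement_vert_eq_0:
  assumes "vert_complement P" and "v \<in> P" and "v \<in> vert"
  shows "v = 0"
  using assms by (auto simp: vert_complement_def)

lemma vert_complement_ex1:
  assumes "vert_complement P"
  shows "\<exists>!X. X \<in> P \<and> fst X = x"
proof -
  have sP: "subspace P" and iP: "P \<inter> vert = {0}"
    and cP: "{h + w | h w. h \<in> P \<and> w \<in> vert} = UNIV"
    using assms by (auto simp: vert_complement_def)
  have "(x, 0) \<in> {h + w | h w. h \<in> P \<and> w \<in> vert}"
    using cP by simp
  then obtain h w where "(x, 0) = h + w" "h \<in> P" "w \<in> vert"
    by blast
  then have "h \<in> P \<and> fst h = x"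
    by (metis add.right_neutral fst_add fst_conv mem_vert_iff)
  moreover have "X = Y" if "X \<in> P" "fst X = x" "Y \<in> P" "fst Y = x" for X Y
  proof -
    have "X - Y \<in> P \<inter> vert"
      using that sP by (simp add: subspace_diff mem_vert_iff)
    then show ?thesis using iP by simp
  qed
  ultimately show ?thesis by blast
qed

lemma
  assumes "vert_complement P"
  shows hlift_mem: "hlift P x \<in> P" and fst_hlift [simp]: "fst (hlift P x) = x"
  using theI'[OF vert_complement_ex1[OF assms, of x]] by (auto simp: hlift_def)

lemma hlift_fst:
  assumes "vert_complement P" and "X \<in> P"
  shows "hlift P (fst X) = X"
  unfolding hlift_def using assms by (intro the1_equality vert_complement_ex1) auto

lemma linear_hlift:
  fixes P :: "('n::finite, 'r::finite) pt set"
  assumes "vert_complement P"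
  shows "linear (hlift P)"
proof -
  have sP: "subspace P" using assms by (simp add: vert_complement_def)
  show ?thesis
  proof (rule linearI)
    fix x y :: "real^'n" and c :: real
    show "hlift P (x + y) = hlift P x + hlift P y"
      using hlift_fst[OF assms, of "hlift P x + hlift P y"]
      by (simp add: assms hlift_mem sP subspace_add)
    show "hlift P (c *\<^sub>R x) = c *\<^sub>R hlift P x"
      using hlift_fst[OF assms, of "c *\<^sub>R hlift P x"]
      by (simp add: assms hlift_mem sP subspace_scale)
  qed
qed

lemma adapted_frame_Inl:
  "adapted_frame D e (Inl mu) p = hlift (D p) (fst (e (Inl mu) p))"
  by (simp add: adapted_frame_def hlift_def)

lemma adapted_frame_Inr:
  "adapted_frame D e (Inr a) p = e (Inr a) p"
  by (simp add: adapted_frame_def)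

lemma adapted_frame_Inl_minus_vert:
  assumes "vert_complement (D p)"
  shows "adapted_frame D e (Inl mu) p - e (Inl mu) p \<in> vert"
  using assms by (simp add: adapted_frame_Inl mem_vert_iff)

lemma adapted_frame_Inl_eq_iff:
  assumes "vert_complement (D p)"
  shows "adapted_frame D e (Inl mu) p = e (Inl mu) p \<longleftrightarrow> e (Inl mu) p \<in> D p"
  using assms by (metis adapted_frame_Inl hlift_fst hlift_mem)

(* L and M stand for the differentials of a change of bundle coordinates and of its inverse;
   L_vert says that the coordinate change preserves fibres. *)
locale vert_iso =
  fixes L M :: "('n::finite, 'r::finite) pt \<Rightarrow> ('n, 'r) pt"
  assumes linear_L: "linear L" and linear_M: "linear M"
    and M_L [simp]: "\<And>v. M (L v) = v" and L_M [simp]: "\<And>v. L (M v) = v"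
    and L_vert: "\<And>v. v \<in> vert \<Longrightarrow> L v \<in> vert"
begin

lemma L_image_vert: "L ` vert = vert"
proof (rule subspace_dim_equal)
  show "subspace (L ` vert)"
    by (rule linear_subspace_image[OF linear_L subspace_vert])
  show "L ` vert \<subseteq> vert"
    using L_vert by blast
  have "inj L"
    by (metis M_L injI)
  then have "dim (L ` vert) = dim (vert :: ('n, 'r) pt set)"
    using dim_image_eq[OF linear_L, of vert] by (simp add: inj_on_subset)
  then show "dim (vert :: ('n, 'r) pt set) \<le> dim (L ` vert)"
    by simp
qed (rule subspace_vert)

lemma M_vert: "v \<in> vert \<Longrightarrow> M v \<in> vert"
  by (metis L_image_vert M_L imageE)

lemma L_eq_0_iff [simp]: "L v = 0 \<longleftrightarrow> v = 0"
  by (metis M_L linear_0[OF linear_L])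

lemma frame_coeffs_eq:
  assumes frame: "\<And>I. e I p = M (bvec I)" and "vert_complement (D p)"
  shows "frame_coeffs D e p mu a = snd (L (adapted_frame D e (Inl mu) p - e (Inl mu) p)) $ a"
proof -
  define d where "d = L (adapted_frame D e (Inl mu) p - e (Inl mu) p)"
  have "d \<in> vert"
    unfolding d_def using assms by (intro L_vert adapted_frame_Inl_minus_vert)
  then have d: "d = (0, snd d)"
    by (simp add: mem_vert_iff prod_eq_iff)
  have "adapted_frame D e (Inl mu) p = e (Inl mu) p + (\<Sum>b\<in>UNIV. c b *\<^sub>R e (Inr b) p)
      \<longleftrightarrow> c = (\<lambda>b. snd d $ b)" for c
  proof -
    have "(\<Sum>b\<in>UNIV. c b *\<^sub>R e (Inr b) p) = M (0, \<chi> b. c b)"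
      by (simp add: frame linear_sum[OF linear_M] linear_scale[OF linear_M] flip: sum_bvec_Inr)
    then have "adapted_frame D e (Inl mu) p = e (Inl mu) p + (\<Sum>b\<in>UNIV. c b *\<^sub>R e (Inr b) p)
        \<longleftrightarrow> d = (0, \<chi> b. c b)"
      unfolding d_def by (metis L_M M_L add_diff_cancel_left' diff_add_cancel)
    also have "\<dots> \<longleftrightarrow> c = (\<lambda>b. snd d $ b)"
      by (subst d) (auto simp: vec_eq_iff)
    finally show ?thesis .
  qed
  then show ?thesis
    by (simp add: frame_coeffs_def d_def)
qed

lemma normal_at_iff_adapted_eq:
  assumes frame: "\<And>I. e I p = M (bvec I)" and compl: "vert_complement (D p)"
  shows "(\<forall>mu a. frame_coeffs D e p mu a = 0) \<longleftrightarrow>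
    (\<forall>mu. adapted_frame D e (Inl mu) p = e (Inl mu) p)"
proof -
  have "(\<forall>a. frame_coeffs D e p mu a = 0) \<longleftrightarrow> adapted_frame D e (Inl mu) p = e (Inl mu) p" for mu
  proof -
    define d where "d = adapted_frame D e (Inl mu) p - e (Inl mu) p"
    have "L d \<in> vert"
      unfolding d_def using compl by (intro L_vert adapted_frame_Inl_minus_vert)
    then have "(\<forall>a. frame_coeffs D e p mu a = 0) \<longleftrightarrow> L d = 0"
      by (simp add: frame_coeffs_eq[where D = D and e = e and p = p, OF assms] d_def
          vec_eq_iff prod_eq_iff mem_vert_iff)
    also have "\<dots> \<longleftrightarrow> adapted_frame D e (Inl mu) p = e (Inl mu) p"
      by (simp add: d_def)
    finally show ?thesis .
  qed
  then show ?thesis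
    by blast
qed

lemma M_base_horizontal_iff:
  assumes compl: "vert_complement P"
  shows "(\<forall>mu. M (bvec (Inl mu)) \<in> P) \<longleftrightarrow> (\<forall>mu. snd (L (hlift P (axis mu 1))) = 0)"
proof
  have sP: "subspace P"
    using compl by (simp add: vert_complement_def)
  assume horizontal: "\<forall>mu. M (bvec (Inl mu)) \<in> P"
  have base: "M (x, 0) \<in> P" for x
  proof -
    have "linear (\<lambda>x. M (x, 0))"
      by (rule linearI) (simp_all flip: linear_add[OF linear_M] linear_scale[OF linear_M])
    then have "M (x, 0) = (\<Sum>i\<in>UNIV. x $ i *\<^sub>R M (axis i 1, 0))"
      by (rule linear_cart_expansion)
    also have "\<dots> \<in> P"
      using horizontal sP by (intro subspace_sum subspace_scale) (auto simp: bvec_def)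
    finally show ?thesis .
  qed
  show "\<forall>mu. snd (L (hlift P (axis mu 1))) = 0"
  proof
    fix mu
    obtain u v where uv: "L (hlift P (axis mu 1)) = (u, v)"
      by (cases "L (hlift P (axis mu 1))")
    have "hlift P (axis mu 1) = M (u, 0) + M (0, v)"
      by (metis M_L uv add_Pair add.left_neutral add.right_neutral linear_add[OF linear_M])
    then have "M (0, v) \<in> P"
      by (metis add_diff_cancel_left' base compl hlift_mem sP subspace_diff)
    moreover have "M (0, v) \<in> vert"
      by (intro M_vert) (simp add: mem_vert_iff)
    ultimately have "M (0, v) = 0"
      by (rule vert_complement_vert_eq_0[OF compl])
    then have "v = 0"
      by (metis L_M L_eq_0_iff snd_conv snd_zero)
    then show "snd (L (hlift P (axis mu 1))) = 0"
      by (simp add: uv)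
  qed
next
  assume "\<forall>mu. snd (L (hlift P (axis mu 1))) = 0"
  moreover have "linear (snd \<circ> L \<circ> hlift P)"
    by (intro linear_compose linear_hlift[OF compl] linear_L
        bounded_linear.linear[OF bounded_linear_snd])
  ultimately have lifted: "snd (L (hlift P x)) = 0" for x
    using linear_cart_expansion[of "snd \<circ> L \<circ> hlift P" x] by simp
  show "\<forall>mu. M (bvec (Inl mu)) \<in> P"
  proof
    fix mu
    define d where "d = hlift P (fst (M (bvec (Inl mu)))) - M (bvec (Inl mu))"
    have "L d \<in> vert"
      unfolding d_def using compl by (intro L_vert) (simp add: mem_vert_iff)
    moreover have "snd (L d) = 0"
      using lifted by (simp add: d_def linear_diff[OF linear_L] bvec_def)
    ultimately have "L d = 0"
      by (simp add: mem_vert_iff prod_eq_iff)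
    then show "M (bvec (Inl mu)) \<in> P"
      by (metis L_eq_0_iff compl d_def eq_iff_diff_eq_0 hlift_mem)
  qed
qed

end

interpretation id: vert_iso id id
  by unfold_locales simp_all

lemma frame_coeffs_ucoord_frame:
  assumes "vert_complement (D p)"
  shows "frame_coeffs D ucoord_frame p mu a = snd (hlift (D p) (axis mu 1)) $ a"
  using id.frame_coeffs_eq[of ucoord_frame p D mu a] assms
  by (simp add: ucoord_frame_def adapted_frame_Inl bvec_def)

lemma normal_coords_lhs_eq:
  assumes compl: "vert_complement (D p)"
    and L: "frechet_derivative phi (at p) = L" and lin: "linear L"
  shows "(\<Sum>b\<in>UNIV. pd phi p (Inr b) (Inr a) * frame_coeffs D ucoord_frame p mu b)
      + pd phi p (Inl mu) (Inr a) = snd (L (hlift (D p) (axis mu 1))) $ a"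
proof -
  define X where "X = hlift (D p) (axis mu 1)"
  have "X = bvec (Inl mu) + (\<Sum>b\<in>UNIV. snd X $ b *\<^sub>R bvec (Inr b))"
    unfolding sum_bvec_Inr using compl by (simp add: X_def bvec_def prod_eq_iff)
  from arg_cong[OF this, of L]
  have "L X = L (bvec (Inl mu)) + (\<Sum>b\<in>UNIV. snd X $ b *\<^sub>R L (bvec (Inr b)))"
    by (simp only: linear_add[OF lin] linear_scale[OF lin] linear_sum[OF lin])
  then show ?thesis
    using compl
    by (simp add: X_def pd_def comp_def L frame_coeffs_ucoord_frame snd_sum sum_component mult.commute)
qed

lemma bundle_coords_vert_iso:
  assumes bc: "bundle_coords V phi psi" and "open V" and "p \<in> V"
  shows "vert_iso (frechet_derivative phi (at p)) (frechet_derivative psi (at (phi p)))"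
proof -
  have "open (phi ` V)" and "smooth_on V phi" and "smooth_on (phi ` V) psi"
    and inv: "\<And>p. p \<in> V \<Longrightarrow> psi (phi p) = p" "\<And>q. q \<in> phi ` V \<Longrightarrow> phi (psi q) = q"
    and fibre: "\<And>p q. p \<in> V \<Longrightarrow> q \<in> V \<Longrightarrow> fst p = fst q \<Longrightarrow> fst (phi p) = fst (phi q)"
    using bc unfolding bundle_coords_def by blast+
  have dphi: "(phi has_derivative frechet_derivative phi (at p)) (at p)"
    using \<open>smooth_on V phi\<close> \<open>open V\<close> \<open>p \<in> V\<close> by (rule smooth_on_has_derivative)
  have dpsi: "(psi has_derivative frechet_derivative psi (at (phi p))) (at (phi p))"
    using smooth_on_has_derivative[OF \<open>smooth_on (phi ` V) psi\<close> \<open>open (phi ` V)\<close>] \<open>p \<in> V\<close>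
    by blast
  have dphi': "(phi has_derivative frechet_derivative phi (at p)) (at (psi (phi p)))"
    using dphi inv(1)[OF \<open>p \<in> V\<close>] by simp
  have M_L: "frechet_derivative psi (at (phi p)) (frechet_derivative phi (at p) v) = v" for v
    by (rule has_derivative_left_inverse[OF dphi dpsi \<open>open V\<close> \<open>p \<in> V\<close> inv(1)])
  have L_M: "frechet_derivative phi (at p) (frechet_derivative psi (at (phi p)) v) = v" for v
    by (rule has_derivative_left_inverse[OF dpsi dphi' \<open>open (phi ` V)\<close> imageI[OF \<open>p \<in> V\<close>]
          inv(2)])
  have L_vert: "frechet_derivative phi (at p) v \<in> vert" if "v \<in> vert" for v
  proof -
    have "fst (frechet_derivative phi (at p) (0, snd v)) = 0"
      by (rule has_derivative_fibre_preserving[OF dphi \<open>open V\<close> \<open>p \<in> V\<close> fibre[OF _ \<open>p \<in> V\<close>]])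
    moreover have "(0, snd v) = v"
      using that by (simp add: mem_vert_iff prod_eq_iff)
    ultimately show ?thesis
      by (simp add: mem_vert_iff)
  qed
  show ?thesis
    using has_derivative_linear[OF dphi] has_derivative_linear[OF dpsi] M_L L_M L_vert
    by (rule vert_iso.intro)
qed

lemma normal_at_coord_frame:
  assumes "bundle_coords V phi psi" and "open V" and "p \<in> V" and compl: "vert_complement (D p)"
  shows normal_at_iff_adapted_coord_frame:
      "(\<forall>mu a. frame_coeffs D (coord_frame phi psi) p mu a = 0) \<longleftrightarrow>
        (\<forall>mu. adapted_frame D (coord_frame phi psi) (Inl mu) p = coord_frame phi psi (Inl mu) p)"
      (is "?normal \<longleftrightarrow> ?adapted")
    and normal_at_iff_normal_coords_eq:
      "(\<forall>mu a. frame_coeffs D (coord_frame phi psi) p mu a = 0) \<longleftrightarrow>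
        (\<forall>mu a. (\<Sum>b\<in>UNIV. pd phi p (Inr b) (Inr a) * frame_coeffs D ucoord_frame p mu b)
          + pd phi p (Inl mu) (Inr a) = 0)"
      (is "_ \<longleftrightarrow> ?equation")
proof -
  interpret vert_iso "frechet_derivative phi (at p)" "frechet_derivative psi (at (phi p))"
    using assms(1-3) by (rule bundle_coords_vert_iso)
  have frame: "coord_frame phi psi I p = frechet_derivative psi (at (phi p)) (bvec I)" for I
    by (simp add: coord_frame_def)
  show "?normal \<longleftrightarrow> ?adapted"
    using frame compl by (rule normal_at_iff_adapted_eq)
  also have "\<dots> \<longleftrightarrow> (\<forall>mu. coord_frame phi psi (Inl mu) p \<in> D p)"
    using compl by (simp add: adapted_frame_Inl_eq_iff)
  also have "\<dots> \<longleftrightarrow> (\<forall>mu. snd (frechet_derivative phi (at p) (hlift (D p) (axis mu 1))) = 0)"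
    unfolding frame using compl by (rule M_base_horizontal_iff)
  also have "\<dots> \<longleftrightarrow> ?equation"
    by (simp add: normal_coords_lhs_eq[where D = D and p = p, OF compl refl linear_L] vec_eq_iff)
  finally show "?normal \<longleftrightarrow> ?equation" .
qed

lemma adapted_coord_frame_Inl:
  assumes "vert_complement (D p)"
  shows "adapted_frame D (coord_frame phi psi) (Inl mu) p
    = (\<Sum>nu\<in>UNIV. Amat phi psi p (Inl mu) (Inl nu) *\<^sub>R adapted_frame D ucoord_frame (Inl nu) p)"
  using linear_cart_expansion[OF linear_hlift[OF assms], of "fst (coord_frame phi psi (Inl mu) p)"]
  by (simp add: adapted_frame_Inl Amat_def pd_def comp_def coord_frame_def ucoord_frame_def bvec_def)

lemma adapted_coord_frame_Inr:
  assumes "bundle_coords V phi psi" and "open V" and "p \<in> V"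
  shows "adapted_frame D (coord_frame phi psi) (Inr a) p
    = (\<Sum>b\<in>UNIV. Amat phi psi p (Inr a) (Inr b) *\<^sub>R adapted_frame D ucoord_frame (Inr b) p)"
proof -
  interpret vert_iso "frechet_derivative phi (at p)" "frechet_derivative psi (at (phi p))"
    using assms by (rule bundle_coords_vert_iso)
  have "coord_frame phi psi (Inr a) p \<in> vert"
    using M_vert[of "bvec (Inr a)"] by (simp add: coord_frame_def bvec_def mem_vert_iff)
  then show ?thesis
    by (simp add: vert_expansion adapted_frame_Inr Amat_def pd_def coord_frame_def ucoord_frame_def)
qed

lemma normal_on_coord_frame_iff:
  assumes "bundle_coords V phi psi" and "open V" and "U \<subseteq> V"
    and "\<forall>p\<in>U. vert_complement (D p)"
  shows "normal_on D (coord_frame phi psi) U \<longleftrightarrow> normal_coords_eq D phi U"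
  unfolding normal_on_def normal_coords_eq_def using assms(3,4)
  by (intro ball_cong[OF refl] normal_at_iff_normal_coords_eq[OF assms(1,2)]) auto

lemma normal_on_adapted_coord_frame_eq:
  assumes "bundle_coords V phi psi" and "open V" and "U \<subseteq> V"
    and "\<forall>p\<in>U. vert_complement (D p)"
    and "normal_on D (coord_frame phi psi) U" and "p \<in> U"
  shows "adapted_frame D (coord_frame phi psi) (Inl mu) p = coord_frame phi psi (Inl mu) p"
proof -
  have "\<forall>mu a. frame_coeffs D (coord_frame phi psi) p mu a = 0"
    using assms(5,6) by (simp add: normal_on_def)
  then show ?thesis
    using normal_at_iff_adapted_coord_frame[where D = D,
        OF assms(1,2) subsetD[OF assms(3,6)] bspec[OF assms(4,6)]]
    by blast
qed

theorem proposition5p1: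
  fixes D :: "('n::finite, 'r::finite) pt \<Rightarrow> ('n, 'r) pt set"
    and W V U :: "('n, 'r) pt set"
  assumes "open W" and "connection W D"
    and "open V" and "V \<subseteq> W" and "U \<subseteq> V"
    and "\<exists>phi psi. bundle_coords V phi psi \<and> normal_coords_eq D phi U"
  shows "\<forall>phi psi. bundle_coords V phi psi \<longrightarrow>
    ((normal_on D (coord_frame phi psi) U \<longleftrightarrow> normal_coords_eq D phi U) \<and>
     (normal_on D (coord_frame phi psi) U \<longrightarrow>
        (\<forall>p\<in>U.
          (\<forall>mu. adapted_frame D (coord_frame phi psi) (Inl mu) p
                  = (\<Sum>nu\<in>UNIV. Amat phi psi p (Inl mu) (Inl nu) *\<^sub>R adapted_frame D ucoord_frame (Inl nu) p) \<and>
                adapted_frame D (coord_frame phi psi) (Inl mu) p = coord_frame phi psi (Inl mu) p) \<and>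
          (\<forall>a. adapted_frame D (coord_frame phi psi) (Inr a) p
                  = (\<Sum>b\<in>UNIV. Amat phi psi p (Inr a) (Inr b) *\<^sub>R adapted_frame D ucoord_frame (Inr b) p) \<and>
                adapted_frame D (coord_frame phi psi) (Inr a) p = coord_frame phi psi (Inr a) p))))"
proof -
  (* The existence of solutions only makes the described family nonempty. *)
  have compl: "\<forall>p\<in>U. vert_complement (D p)"
    using assms(2,4,5) connection_vert_complement by blast
  show ?thesis
  proof (intro allI impI conjI ballI)
    fix phi psi
    assume "bundle_coords V phi psi"
    then show "normal_on D (coord_frame phi psi) U \<longleftrightarrow> normal_coords_eq D phi U"
      using \<open>open V\<close> \<open>U \<subseteq> V\<close> compl by (rule normal_on_coord_frame_iff)
  next
    fix phi psi p mu
    assume "p \<in> U"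
    then show "adapted_frame D (coord_frame phi psi) (Inl mu) p
        = (\<Sum>nu\<in>UNIV. Amat phi psi p (Inl mu) (Inl nu) *\<^sub>R adapted_frame D ucoord_frame (Inl nu) p)"
      using compl by (intro adapted_coord_frame_Inl) blast
  next
    fix phi psi p mu
    assume "bundle_coords V phi psi" and "normal_on D (coord_frame phi psi) U" and "p \<in> U"
    then show "adapted_frame D (coord_frame phi psi) (Inl mu) p = coord_frame phi psi (Inl mu) p"
      by (rule normal_on_adapted_coord_frame_eq[OF _ \<open>open V\<close> \<open>U \<subseteq> V\<close> compl])
  next
    fix phi psi p a
    assume "bundle_coords V phi psi" and "p \<in> U"
    then show "adapted_frame D (coord_frame phi psi) (Inr a) p
        = (\<Sum>b\<in>UNIV. Amat phi psi p (Inr a) (Inr b) *\<^sub>R adapted_frame D ucoord_frame (Inr b) p)"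
      using \<open>open V\<close> \<open>U \<subseteq> V\<close> by (intro adapted_coord_frame_Inr[where V = V]) auto
  next
    fix phi psi p a
    show "adapted_frame D (coord_frame phi psi) (Inr a) p = coord_frame phi psi (Inr a) p"
      by (rule adapted_frame_Inr)
  qed
qed

end
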